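(* Let $G$ be a graph on $n$ vertices and $1\le k\le n-1$. Suppose that $F_k(G)$ is uniquely reconstructible as the $k$-token graph of $G$. Then $\operatorname{Aut}(F_k(G))\simeq \operatorname{Aut}(G)\times\mathbb{Z}_2$ if $k=n/2$ and $n\ge 4$, and $\operatorname{Aut}(F_k(G))\simeq\operatorname{Aut}(G)$ otherwise.
   Context: $F_k(G)$ is the graph on the $k$-subsets of $V(G)$ in which $A,B$ are adjacent iff $A\triangle B$ is an edge of $G$. For $\psi$ an isomorphism between graphs $H\to G$, $\iota(\psi)$ maps a $k$-subset $A$ of $V(H)$ to $\{\psi(v):v\in A\}$. Let $\mathfrak{c}$ send each $k$-subset $A$ of $V(G)$ to $V(G)\setminus A$. A $k$-token reconstruction of a graph $F$ is a pair $(G',\varphi)$ with $\varphi$ an isomorphism $F\to F_k(G')$. Two $k$-token reconstructions $(G,\varphi),(G,\psi)$ of $F$ are equivalent if there is $s\in\operatorname{Aut}(G)$ with $\psi=\iota(s)\circ\varphi$ or $\psi=\mathfrak{c}\circ\iota(s)\circ\varphi$. $F$ is uniquely reconstructible as the $k$-token graph of $G$ if any two $k$-token reconstructions of $F$ of the form $(G,\cdot)$ are equivalent. *)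

theory Defs
  imports "HOL-Algebra.Algebra"
begin

type_synonym 'a graph = "'a set \<times> 'a set set"

definition simple_graph :: "'a graph \<Rightarrow> bool" where
  "simple_graph G \<longleftrightarrow> finite (fst G) \<and> (\<forall>e\<in>snd G. e \<subseteq> fst G \<and> card e = 2)"

definition graph_iso :: "'a graph \<Rightarrow> 'b graph \<Rightarrow> ('a \<Rightarrow> 'b) \<Rightarrow> bool" where
  "graph_iso H G f \<longleftrightarrow> bij_betw f (fst H) (fst G) \<and>
     (\<forall>u\<in>fst H. \<forall>v\<in>fst H. {u, v} \<in> snd H \<longleftrightarrow> {f u, f v} \<in> snd G)"

definition token_graph :: "nat \<Rightarrow> 'a graph \<Rightarrow> 'a set graph" where
  "token_graph k G =
     ({A. A \<subseteq> fst G \<and> card A = k},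
      {{A, B} | A B. A \<subseteq> fst G \<and> card A = k \<and> B \<subseteq> fst G \<and> card B = k
                   \<and> (A - B) \<union> (B - A) \<in> snd G})"

definition iota :: "('a \<Rightarrow> 'b) \<Rightarrow> 'a set \<Rightarrow> 'b set" where
  "iota \<psi> A = \<psi> ` A"

definition compl_map :: "'a graph \<Rightarrow> 'a set \<Rightarrow> 'a set" where
  "compl_map G A = fst G - A"

definition token_reconstruction :: "'b graph \<Rightarrow> nat \<Rightarrow> 'a graph \<Rightarrow> ('b \<Rightarrow> 'a set) \<Rightarrow> bool" where
  "token_reconstruction F k G' \<phi> \<longleftrightarrow> graph_iso F (token_graph k G') \<phi>"

definition equiv_reconstructions ::
  "'b graph \<Rightarrow> 'a graph \<Rightarrow> ('b \<Rightarrow> 'a set) \<Rightarrow> ('b \<Rightarrow> 'a set) \<Rightarrow> bool" where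
  "equiv_reconstructions F G \<phi> \<psi> \<longleftrightarrow>
     (\<exists>s. graph_iso G G s \<and>
        ((\<forall>x\<in>fst F. \<psi> x = iota s (\<phi> x)) \<or>
         (\<forall>x\<in>fst F. \<psi> x = compl_map G (iota s (\<phi> x)))))"

definition uniquely_reconstructible :: "'b graph \<Rightarrow> nat \<Rightarrow> 'a graph \<Rightarrow> bool" where
  "uniquely_reconstructible F k G \<longleftrightarrow>
     (\<forall>\<phi> \<psi>. token_reconstruction F k G \<phi> \<and> token_reconstruction F k G \<psi>
        \<longrightarrow> equiv_reconstructions F G \<phi> \<psi>)"

definition aut_group :: "'a graph \<Rightarrow> ('a \<Rightarrow> 'a) monoid" where
  "aut_group G = (BijGroup (fst G)) \<lparr> carrier := {f \<in> Bij (fst G). graph_iso G G f} \<rparr>"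

end

theory Submission
  imports Defs
begin

text \<open>Every automorphism \<open>s\<close> of \<open>G\<close> induces the automorphism \<open>\<iota>(s)\<close> of \<open>F\<^sub>k(G)\<close>, and
  \<open>s \<mapsto> \<iota>(s)\<close> is injective for \<open>0 < k < n\<close> because a bijection is determined by the images of
  the \<open>k\<close>-sets. Comparing the identity reconstruction with the one given by an automorphism \<open>\<psi>\<close>
  of \<open>F\<^sub>k(G)\<close>, unique reconstructibility makes \<open>\<psi>\<close> equal to \<open>\<iota>(s)\<close> or to \<open>c \<circ> \<iota>(s)\<close>,
  where \<open>c\<close> is complementation; the latter forces \<open>n = 2k\<close>. Then \<open>c\<close> is a central involution
  of \<open>Aut(F\<^sub>k(G))\<close>. For \<open>n \<ge> 4\<close> it is induced by no \<open>s\<close> (a \<open>k\<close>-set containing \<open>u\<close> and \<open>s(u)\<close>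
  meets its image), so it splits off a factor \<open>\<int>\<^sub>2\<close>; for \<open>n = 2\<close> it is induced by the
  transposition of the two vertices.\<close>

definition involution_extension :: "('a, 'm) monoid_scheme \<Rightarrow> ('b \<Rightarrow> 'a) \<Rightarrow> 'a \<Rightarrow> 'b \<times> int \<Rightarrow> 'a" where
  "involution_extension G h c p = (if snd p = 0 then h (fst p) else c \<otimes>\<^bsub>G\<^esub> h (fst p))"

lemma carrier_integer_mod_group_2: "carrier (integer_mod_group 2) = {0, 1}"
  by (auto simp: carrier_integer_mod_group)

lemma (in group) involution_extension_hom:
  assumes h: "h \<in> hom A G" and c: "c \<in> carrier G" "c \<otimes> c = \<one>"
    and central: "\<And>a. a \<in> carrier A \<Longrightarrow> c \<otimes> h a = h a \<otimes> c"
  shows "involution_extension G h c \<in> hom (A \<times>\<times> integer_mod_group 2) G"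
proof (rule homI)
  have hA: "h a \<in> carrier G" if "a \<in> carrier A" for a
    using h that by (rule hom_in_carrier)
  then show "involution_extension G h c p \<in> carrier G"
    if "p \<in> carrier (A \<times>\<times> integer_mod_group 2)" for p
    using that c by (auto simp: involution_extension_def)
  fix p q
  assume "p \<in> carrier (A \<times>\<times> integer_mod_group 2)" "q \<in> carrier (A \<times>\<times> integer_mod_group 2)"
  then obtain a e b e' where p: "p = (a, e)" "a \<in> carrier A" "e \<in> {0, 1}"
    and q: "q = (b, e')" "b \<in> carrier A" "e' \<in> {0, 1}"
    by (auto simp: carrier_integer_mod_group_2)
  have "h (a \<otimes>\<^bsub>A\<^esub> b) = h a \<otimes> h b"
    using h p q by (simp add: hom_mult)
  moreover have "h a \<otimes> (c \<otimes> h b) = c \<otimes> (h a \<otimes> h b)"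
    using central[OF p(2)] p q c by (simp add: hA m_assoc[symmetric])
  moreover have "c \<otimes> h a \<otimes> (c \<otimes> h b) = h a \<otimes> h b"
    using central[OF p(2)] p q c by (simp add: hA m_assoc[symmetric]) (simp add: hA m_assoc)
  ultimately show "involution_extension G h c (p \<otimes>\<^bsub>A \<times>\<times> integer_mod_group 2\<^esub> q) =
      involution_extension G h c p \<otimes> involution_extension G h c q"
    using p q c by (auto simp: involution_extension_def hA m_assoc)
qed

lemma (in group) inj_on_involution_extension:
  assumes A: "group A" and h: "h \<in> hom A G" "inj_on h (carrier A)"
    and c: "c \<in> carrier G" "c \<notin> h ` carrier A"
  shows "inj_on (involution_extension G h c) (carrier (A \<times>\<times> integer_mod_group 2))"
proof (rule inj_onI)
  interpret h: group_hom A G h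
    by (simp add: group_hom_def group_hom_axioms_def A is_group h(1))
  fix p q
  assume "p \<in> carrier (A \<times>\<times> integer_mod_group 2)" "q \<in> carrier (A \<times>\<times> integer_mod_group 2)"
    and eq: "involution_extension G h c p = involution_extension G h c q"
  then obtain a e b e' where p: "p = (a, e)" "a \<in> carrier A" "e \<in> {0, 1}"
    and q: "q = (b, e')" "b \<in> carrier A" "e' \<in> {0, 1}"
    by (auto simp: carrier_integer_mod_group_2)
  have no_mixed: False if "h x = c \<otimes> h y" "x \<in> carrier A" "y \<in> carrier A" for x y
  proof -
    have "c = h x \<otimes> inv h y"
      using that c by (simp add: m_assoc)
    also have "\<dots> = h (x \<otimes>\<^bsub>A\<^esub> inv\<^bsub>A\<^esub> y)"
      using that by simp
    finally show False
      using c(2) that by blast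
  qed
  show "p = q"
    using eq p q no_mixed[of a b] no_mixed[of b a] inj_onD[OF h(2)] c
    by (auto simp: involution_extension_def)
qed

lemma (in group) iso_DirProd_integer_mod_group_2:
  assumes A: "group A" and h: "h \<in> hom A G" "inj_on h (carrier A)"
    and c: "c \<in> carrier G" "c \<otimes> c = \<one>" "c \<notin> h ` carrier A"
    and central: "\<And>a. a \<in> carrier A \<Longrightarrow> c \<otimes> h a = h a \<otimes> c"
    and covers: "carrier G \<subseteq> h ` carrier A \<union> (\<lambda>a. c \<otimes> h a) ` carrier A"
  shows "G \<cong> A \<times>\<times> integer_mod_group 2"
proof -
  let ?\<theta> = "involution_extension G h c"
  have hom: "?\<theta> \<in> hom (A \<times>\<times> integer_mod_group 2) G"
    using h(1) c(1,2) central by (rule involution_extension_hom)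
  have "h a \<in> ?\<theta> ` carrier (A \<times>\<times> integer_mod_group 2)"
    and "c \<otimes> h a \<in> ?\<theta> ` carrier (A \<times>\<times> integer_mod_group 2)" if "a \<in> carrier A" for a
    using that by (force simp: involution_extension_def carrier_integer_mod_group_2)+
  then have "?\<theta> ` carrier (A \<times>\<times> integer_mod_group 2) = carrier G"
    using covers hom_in_carrier[OF hom] by blast
  then have "?\<theta> \<in> iso (A \<times>\<times> integer_mod_group 2) G"
    using hom inj_on_involution_extension[OF A h c(1,3)] by (simp add: iso_def bij_betw_def)
  then show ?thesis
    using group.iso_sym[OF DirProd_group[OF A group_integer_mod_group]] is_isoI by blast
qed

lemma graph_iso_cong:
  assumes "\<And>x. x \<in> fst G \<Longrightarrow> f x = g x"
  shows "graph_iso G H f \<longleftrightarrow> graph_iso G H g"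
  using assms bij_betw_cong[of "fst G" f g] by (simp add: graph_iso_def)

lemma graph_iso_comp:
  assumes f: "graph_iso G H f" and g: "graph_iso H K g"
  shows "graph_iso G K (g \<circ> f)"
proof -
  have "f u \<in> fst H" if "u \<in> fst G" for u
    using f that by (auto simp: graph_iso_def bij_betw_def)
  then show ?thesis
    using assms by (auto simp: graph_iso_def intro: bij_betw_trans)
qed

lemma graph_iso_inv_into:
  assumes f: "graph_iso G H f"
  shows "graph_iso H G (inv_into (fst G) f)"
proof -
  have bij: "bij_betw f (fst G) (fst H)"
    using f by (simp add: graph_iso_def)
  have "{u, v} \<in> snd H \<longleftrightarrow> {inv_into (fst G) f u, inv_into (fst G) f v} \<in> snd G"
    if "u \<in> fst H" "v \<in> fst H" for u v
    using f that bij_betw_inv_into_right[OF bij] bij_betw_apply[OF bij_betw_inv_into[OF bij]]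
    unfolding graph_iso_def by metis
  then show ?thesis
    using bij by (simp add: graph_iso_def bij_betw_inv_into)
qed

lemma aut_group_carrier: "carrier (aut_group G) = {f \<in> Bij (fst G). graph_iso G G f}"
  by (simp add: aut_group_def BijGroup_def)

lemma aut_group_mult [simp]:
  "f \<in> carrier (aut_group G) \<Longrightarrow> g \<in> carrier (aut_group G) \<Longrightarrow>
    f \<otimes>\<^bsub>aut_group G\<^esub> g = compose (fst G) f g"
  by (simp add: aut_group_def BijGroup_def aut_group_carrier)

lemma subgroup_graph_automorphisms:
  "subgroup {f \<in> Bij (fst G). graph_iso G G f} (BijGroup (fst G))"
proof
  fix f g
  assume "f \<in> {f \<in> Bij (fst G). graph_iso G G f}" "g \<in> {f \<in> Bij (fst G). graph_iso G G f}"
  then show "f \<otimes>\<^bsub>BijGroup (fst G)\<^esub> g \<in> {f \<in> Bij (fst G). graph_iso G G f}"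
    using compose_Bij[of f "fst G" g] graph_iso_comp[of G G g G f]
      graph_iso_cong[of G "compose (fst G) f g" "f \<circ> g" G]
    by (auto simp: BijGroup_def compose_def)
next
  fix f
  assume "f \<in> {f \<in> Bij (fst G). graph_iso G G f}"
  then show "inv\<^bsub>BijGroup (fst G)\<^esub> f \<in> {f \<in> Bij (fst G). graph_iso G G f}"
    using graph_iso_inv_into[of G G f] graph_iso_cong[of G "restrict (inv_into (fst G) f) (fst G)"]
    by (auto simp: inv_BijGroup restrict_inv_into_Bij)
next
  show "{f \<in> Bij (fst G). graph_iso G G f} \<subseteq> carrier (BijGroup (fst G))"
    by (simp add: BijGroup_def)
next
  have "graph_iso G G (\<lambda>x. x)"
    by (simp add: graph_iso_def bij_betw_def)
  then show "\<one>\<^bsub>BijGroup (fst G)\<^esub> \<in> {f \<in> Bij (fst G). graph_iso G G f}"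
    using graph_iso_cong[of G "\<lambda>x\<in>fst G. x" "\<lambda>x. x" G] by (simp add: BijGroup_def id_Bij)
qed

lemma group_aut_group: "group (aut_group G)"
  unfolding aut_group_def
  by (rule subgroup.subgroup_is_group[OF subgroup_graph_automorphisms group_BijGroup])

lemma aut_group_one: "\<one>\<^bsub>aut_group G\<^esub> = (\<lambda>x\<in>fst G. x)"
  by (simp add: aut_group_def BijGroup_def)

lemma aut_group_apply_in: "f \<in> carrier (aut_group G) \<Longrightarrow> x \<in> fst G \<Longrightarrow> f x \<in> fst G"
  by (auto simp: aut_group_carrier Bij_def dest: bij_betw_apply)

lemma token_graph_vertices: "fst (token_graph k G) = {A. A \<subseteq> fst G \<and> card A = k}"
  by (simp add: token_graph_def)

lemma token_graph_edge_iff: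
  assumes "A \<in> fst (token_graph k G)" "B \<in> fst (token_graph k G)"
  shows "{A, B} \<in> snd (token_graph k G) \<longleftrightarrow> (A - B) \<union> (B - A) \<in> snd G"
proof
  assume "{A, B} \<in> snd (token_graph k G)"
  then obtain A' B' where "{A, B} = {A', B'}" "(A' - B') \<union> (B' - A') \<in> snd G"
    by (auto simp: token_graph_def)
  then show "(A - B) \<union> (B - A) \<in> snd G"
    by (auto simp: doubleton_eq_iff Un_commute)
next
  assume "(A - B) \<union> (B - A) \<in> snd G"
  then show "{A, B} \<in> snd (token_graph k G)"
    using assms by (auto simp: token_graph_def)
qed

definition token_aut :: "'a graph \<Rightarrow> nat \<Rightarrow> ('a \<Rightarrow> 'a) \<Rightarrow> 'a set \<Rightarrow> 'a set" where
  "token_aut G k s = (\<lambda>A\<in>fst (token_graph k G). iota s A)"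

definition token_compl :: "'a graph \<Rightarrow> nat \<Rightarrow> 'a set \<Rightarrow> 'a set" where
  "token_compl G k = (\<lambda>A\<in>fst (token_graph k G). compl_map G A)"

lemma bij_betw_image_card_subsets:
  assumes "bij_betw f A B"
  shows "bij_betw (image f) {S. S \<subseteq> A \<and> card S = k} {T. T \<subseteq> B \<and> card T = k}"
proof -
  have Pow: "bij_betw (image f) (Pow A) (Pow B)"
    using assms by (rule bij_betw_Pow)
  have card: "card (f ` S) = card S" if "S \<subseteq> A" for S
    using assms that by (meson bij_betw_imp_inj_on card_image inj_on_subset)
  have "image f ` {S. S \<subseteq> A \<and> card S = k} = {T. T \<subseteq> B \<and> card T = k}"
  proof (intro equalityI subsetI)
    fix T
    assume "T \<in> image f ` {S. S \<subseteq> A \<and> card S = k}"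
    then obtain S where S: "S \<subseteq> A" "card S = k" "T = f ` S"
      by blast
    then show "T \<in> {T. T \<subseteq> B \<and> card T = k}"
      using card[OF S(1)] image_mono[OF S(1), of f] bij_betw_imp_surj_on[OF assms] by simp
  next
    fix T
    assume T: "T \<in> {T. T \<subseteq> B \<and> card T = k}"
    then have "T \<in> image f ` Pow A"
      using bij_betw_imp_surj_on[OF Pow] by simp
    then obtain S where "S \<subseteq> A" "T = f ` S"
      by blast
    then show "T \<in> image f ` {S. S \<subseteq> A \<and> card S = k}"
      using T card by auto
  qed
  moreover have "inj_on (image f) {S. S \<subseteq> A \<and> card S = k}"
    using bij_betw_imp_inj_on[OF Pow] by (rule inj_on_subset) auto
  ultimately show ?thesis
    by (simp add: bij_betw_def)
qed

lemma graph_iso_image_edge_iff: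
  assumes G: "simple_graph G" and H: "simple_graph H" and f: "graph_iso G H f"
    and D: "D \<subseteq> fst G"
  shows "f ` D \<in> snd H \<longleftrightarrow> D \<in> snd G"
proof -
  have edge: "{u, v} \<in> snd G \<longleftrightarrow> {f u, f v} \<in> snd H" if "u \<in> fst G" "v \<in> fst G" for u v
    using f that by (simp add: graph_iso_def)
  have "f ` D \<in> snd H \<longleftrightarrow> D \<in> snd G" if two: "card D = 2"
  proof -
    obtain u v where "D = {u, v}"
      using card_2_iff[THEN iffD1, OF two] by blast
    then show ?thesis
      using edge D by simp
  qed
  moreover have "card (f ` D) = card D"
    using f D unfolding graph_iso_def by (meson bij_betw_imp_inj_on card_image inj_on_subset)
  then have "card D = 2" if "f ` D \<in> snd H \<or> D \<in> snd G"
    using G H that unfolding simple_graph_def by metis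
  ultimately show ?thesis
    by blast
qed

lemma token_aut_apply: "A \<in> fst (token_graph k G) \<Longrightarrow> token_aut G k s A = s ` A"
  by (simp add: token_aut_def iota_def)

lemma token_compl_apply: "A \<in> fst (token_graph k G) \<Longrightarrow> token_compl G k A = fst G - A"
  by (simp add: token_compl_def compl_map_def)

lemma token_aut_in_aut_group:
  assumes G: "simple_graph G" and s: "s \<in> carrier (aut_group G)"
  shows "token_aut G k s \<in> carrier (aut_group (token_graph k G))"
proof -
  let ?W = "fst (token_graph k G)"
  have s_bij: "bij_betw s (fst G) (fst G)" and s_iso: "graph_iso G G s"
    using s by (auto simp: aut_group_carrier Bij_def)
  have "bij_betw (image s) ?W ?W"
    using bij_betw_image_card_subsets[OF s_bij] by (simp add: token_graph_vertices)
  then have bij: "bij_betw (token_aut G k s) ?W ?W"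
    by (rule bij_betw_cong[THEN iffD1, rotated]) (simp add: token_aut_apply)
  have "{A, B} \<in> snd (token_graph k G) \<longleftrightarrow>
      {token_aut G k s A, token_aut G k s B} \<in> snd (token_graph k G)"
    if A: "A \<in> ?W" and B: "B \<in> ?W" for A B
  proof -
    have AB: "A \<subseteq> fst G" "B \<subseteq> fst G"
      using A B by (auto simp: token_graph_vertices)
    have sAB: "s ` A \<in> ?W" "s ` B \<in> ?W"
      using bij_betw_apply[OF bij] A B by (simp_all add: token_aut_apply)
    have D: "(A - B) \<union> (B - A) \<subseteq> fst G"
      using AB by blast
    have "s ` (A - B) = s ` A - s ` B" "s ` (B - A) = s ` B - s ` A"
      using AB inj_on_image_set_diff[OF bij_betw_imp_inj_on[OF s_bij]] by blast+
    then have image_sym_diff: "s ` ((A - B) \<union> (B - A)) = (s ` A - s ` B) \<union> (s ` B - s ` A)"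
      by (simp add: image_Un)
    have "{A, B} \<in> snd (token_graph k G) \<longleftrightarrow> (A - B) \<union> (B - A) \<in> snd G"
      by (rule token_graph_edge_iff[OF A B])
    also have "\<dots> \<longleftrightarrow> s ` ((A - B) \<union> (B - A)) \<in> snd G"
      by (rule graph_iso_image_edge_iff[OF G G s_iso D, symmetric])
    also have "\<dots> \<longleftrightarrow> {s ` A, s ` B} \<in> snd (token_graph k G)"
      unfolding image_sym_diff by (rule token_graph_edge_iff[OF sAB, symmetric])
    finally show ?thesis
      using A B by (simp add: token_aut_apply)
  qed
  then show ?thesis
    using bij by (simp add: aut_group_carrier Bij_def graph_iso_def token_aut_def)
qed

lemma token_aut_hom:
  assumes G: "simple_graph G"
  shows "token_aut G k \<in> hom (aut_group G) (aut_group (token_graph k G))"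
proof (rule homI)
  fix s t
  assume s: "s \<in> carrier (aut_group G)" and t: "t \<in> carrier (aut_group G)"
  let ?W = "fst (token_graph k G)"
  have "token_aut G k (compose (fst G) s t) = compose ?W (token_aut G k s) (token_aut G k t)"
  proof (rule extensionalityI[of _ ?W])
    fix A
    assume A: "A \<in> ?W"
    then have "token_aut G k t A \<in> ?W"
      using token_aut_in_aut_group[OF G t] by (rule aut_group_apply_in[rotated])
    then show "token_aut G k (compose (fst G) s t) A = compose ?W (token_aut G k s) (token_aut G k t) A"
      using A by (auto simp: token_aut_apply compose_def token_graph_vertices)
  qed (simp_all add: token_aut_def compose_def)
  then show "token_aut G k (s \<otimes>\<^bsub>aut_group G\<^esub> t) =
      token_aut G k s \<otimes>\<^bsub>aut_group (token_graph k G)\<^esub> token_aut G k t"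
    using s t token_aut_in_aut_group[OF G] by simp
qed (rule token_aut_in_aut_group[OF G])

lemma Bij_eq_if_card_subset_images_eq:
  assumes V: "finite V" and k: "0 < k" "k < card V" and s: "s \<in> Bij V" and t: "t \<in> Bij V"
    and images: "\<And>A. A \<subseteq> V \<Longrightarrow> card A = k \<Longrightarrow> s ` A = t ` A"
  shows "s = t"
proof (rule extensionalityI[of s V])
  fix u
  assume u: "u \<in> V"
  have s_bij: "bij_betw s V V" and t_bij: "bij_betw t V V"
    using s t by (simp_all add: Bij_def)
  obtain w where w: "w \<in> V" "t w = s u"
    using bij_betw_apply[OF s_bij u] bij_betw_imp_surj_on[OF t_bij] by (metis imageE)
  show "s u = t u"
  proof (rule ccontr)
    assume "s u \<noteq> t u"
    then have "u \<in> V - {w}"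
      using u w by auto
    moreover have "k \<le> card (V - {w})"
      using k V w by simp
    ultimately obtain A where A: "u \<in> A" "A \<subseteq> V - {w}" "card A = k"
      using exists_subset_between[of "{u}" k "V - {w}"] k V by auto
    then have "s u \<in> t ` A"
      using images[of A] by blast
    then obtain x where x: "x \<in> A" "t x = t w"
      using w by auto
    then have "x = w"
      using A w inj_onD[OF bij_betw_imp_inj_on[OF t_bij]] by blast
    then show False
      using x A by blast
  qed
qed (use s t in \<open>simp_all add: Bij_def\<close>)

lemma inj_on_token_aut:
  assumes G: "simple_graph G" and k: "0 < k" "k < card (fst G)"
  shows "inj_on (token_aut G k) (carrier (aut_group G))"
proof (rule inj_onI)
  fix s t
  assume "s \<in> carrier (aut_group G)" "t \<in> carrier (aut_group G)"
    and eq: "token_aut G k s = token_aut G k t"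
  moreover have "s ` A = t ` A" if "A \<subseteq> fst G" "card A = k" for A
    using fun_cong[OF eq, of A] that by (simp add: token_aut_apply token_graph_vertices)
  ultimately show "s = t"
    using Bij_eq_if_card_subset_images_eq[OF _ k] G
    by (simp add: aut_group_carrier simple_graph_def)
qed

lemma token_compl_in_aut_group:
  assumes V: "finite (fst G)" and half: "2 * k = card (fst G)"
  shows "token_compl G k \<in> carrier (aut_group (token_graph k G))"
proof -
  let ?W = "fst (token_graph k G)"
  have maps: "token_compl G k A \<in> ?W" if "A \<in> ?W" for A
    using that V half by (auto simp: token_compl_apply token_graph_vertices card_Diff_subset finite_subset)
  have "token_compl G k (token_compl G k A) = A" if "A \<in> ?W" for A
    using that maps[OF that] by (auto simp: token_compl_apply token_graph_vertices)
  then have bij: "bij_betw (token_compl G k) ?W ?W"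
    using maps by (intro bij_betw_byWitness[where f'="token_compl G k"]) auto
  have "{A, B} \<in> snd (token_graph k G) \<longleftrightarrow>
      {token_compl G k A, token_compl G k B} \<in> snd (token_graph k G)"
    if A: "A \<in> ?W" and B: "B \<in> ?W" for A B
  proof -
    have "((fst G - A) - (fst G - B)) \<union> ((fst G - B) - (fst G - A)) = (A - B) \<union> (B - A)"
      using A B by (auto simp: token_graph_vertices)
    then show ?thesis
      using token_graph_edge_iff[OF A B] token_graph_edge_iff[OF maps[OF A] maps[OF B]] A B
      by (simp add: token_compl_apply)
  qed
  then show ?thesis
    using bij by (simp add: aut_group_carrier Bij_def graph_iso_def token_compl_def)
qed

lemma token_compl_square:
  assumes V: "finite (fst G)" and half: "2 * k = card (fst G)"
  shows "token_compl G k \<otimes>\<^bsub>aut_group (token_graph k G)\<^esub> token_compl G k =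
    \<one>\<^bsub>aut_group (token_graph k G)\<^esub>"
proof -
  let ?W = "fst (token_graph k G)"
  have "compose ?W (token_compl G k) (token_compl G k) = (\<lambda>A\<in>?W. A)"
  proof (rule extensionalityI[of _ ?W])
    fix A
    assume A: "A \<in> ?W"
    then have "token_compl G k A \<in> ?W"
      using token_compl_in_aut_group[OF V half] by (rule aut_group_apply_in[rotated])
    then show "compose ?W (token_compl G k) (token_compl G k) A = (\<lambda>A\<in>?W. A) A"
      using A by (auto simp: compose_def token_compl_apply token_graph_vertices)
  qed (simp_all add: compose_def)
  then show ?thesis
    using token_compl_in_aut_group[OF V half] by (simp add: aut_group_one)
qed

lemma token_compl_commute:
  assumes G: "simple_graph G" and half: "2 * k = card (fst G)"
    and s: "s \<in> carrier (aut_group G)"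
  shows "token_compl G k \<otimes>\<^bsub>aut_group (token_graph k G)\<^esub> token_aut G k s =
    token_aut G k s \<otimes>\<^bsub>aut_group (token_graph k G)\<^esub> token_compl G k"
proof -
  let ?W = "fst (token_graph k G)"
  have V: "finite (fst G)"
    using G by (simp add: simple_graph_def)
  have c: "token_compl G k \<in> carrier (aut_group (token_graph k G))"
    using V half by (rule token_compl_in_aut_group)
  have sk: "token_aut G k s \<in> carrier (aut_group (token_graph k G))"
    using G s by (rule token_aut_in_aut_group)
  have s_bij: "bij_betw s (fst G) (fst G)"
    using s by (simp add: aut_group_carrier Bij_def)
  have "compose ?W (token_compl G k) (token_aut G k s) = compose ?W (token_aut G k s) (token_compl G k)"
  proof (rule extensionalityI[of _ ?W])
    fix A
    assume A: "A \<in> ?W"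
    have "s ` (fst G - A) = fst G - s ` A"
      using A s_bij inj_on_image_set_diff[OF bij_betw_imp_inj_on[OF s_bij]]
      by (simp add: token_graph_vertices bij_betw_imp_surj_on)
    moreover have "token_aut G k s A \<in> ?W" "token_compl G k A \<in> ?W"
      using A aut_group_apply_in[OF sk] aut_group_apply_in[OF c] by simp_all
    ultimately show "compose ?W (token_compl G k) (token_aut G k s) A =
        compose ?W (token_aut G k s) (token_compl G k) A"
      using A by (simp add: compose_def token_aut_apply token_compl_apply)
  qed (simp_all add: compose_def)
  then show ?thesis
    using c sk by simp
qed

lemma token_compl_notin_token_aut_image:
  assumes V: "finite (fst G)" and half: "2 * k = card (fst G)" and four: "4 \<le> card (fst G)"
  shows "token_compl G k \<notin> token_aut G k ` carrier (aut_group G)"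
proof
  assume "token_compl G k \<in> token_aut G k ` carrier (aut_group G)"
  then obtain s where s: "s \<in> carrier (aut_group G)" and eq: "token_compl G k = token_aut G k s"
    by blast
  obtain u where u: "u \<in> fst G"
    using four by fastforce
  then have su: "s u \<in> fst G"
    by (rule aut_group_apply_in[OF s])
  have "card {u, s u} \<le> k"
    using half four by (simp add: card_insert_if)
  then obtain A where A: "{u, s u} \<subseteq> A" "A \<subseteq> fst G" "card A = k"
    using exists_subset_between[of "{u, s u}" k "fst G"] u su half V by auto
  then have "fst G - A = s ` A"
    using fun_cong[OF eq, of A] by (simp add: token_compl_apply token_aut_apply token_graph_vertices)
  then show False
    using A by blast
qed

lemma token_compl_two_vertices:
  assumes G: "simple_graph G" and two: "card (fst G) = 2"
  shows "token_compl G 1 \<in> token_aut G 1 ` carrier (aut_group G)"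
proof -
  obtain a b where ab: "fst G = {a, b}" "a \<noteq> b"
    using card_2_iff[THEN iffD1, OF two] by blast
  define swap where "swap = (\<lambda>x\<in>fst G. if x = a then b else a)"
  have swap_bij: "bij_betw swap (fst G) (fst G)"
    using ab by (auto simp: bij_betw_def inj_on_def swap_def)
  have no_loops: "{u} \<notin> snd G" for u
    using G by (auto simp: simple_graph_def)
  have "{u, v} \<in> snd G \<longleftrightarrow> {swap u, swap v} \<in> snd G" if "u \<in> fst G" "v \<in> fst G" for u v
  proof (cases "u = v")
    case False
    then have "{swap u, swap v} = {u, v}"
      using that ab by (auto simp: swap_def)
    then show ?thesis
      by simp
  qed (simp add: no_loops)
  then have "graph_iso G G swap"
    using swap_bij by (simp add: graph_iso_def)
  then have swap_aut: "swap \<in> carrier (aut_group G)"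
    using swap_bij by (simp add: aut_group_carrier Bij_def swap_def)
  have "token_compl G 1 A = token_aut G 1 swap A" for A
  proof (cases "A \<in> fst (token_graph 1 G)")
    case True
    then obtain x where "A = {x}" "x \<in> fst G"
      by (auto simp: token_graph_vertices card_1_singleton_iff)
    then show ?thesis
      using True ab by (auto simp: token_compl_apply token_aut_apply swap_def)
  qed (simp add: token_compl_def token_aut_def)
  then show ?thesis
    using swap_aut by blast
qed

lemma restrict_in_aut_group:
  assumes "graph_iso G G s"
  shows "restrict s (fst G) \<in> carrier (aut_group G)"
  using assms graph_iso_cong[of G "restrict s (fst G)" s G] bij_betw_cong[of "fst G" "restrict s (fst G)" s]
  by (simp add: aut_group_carrier Bij_def graph_iso_def)

lemma token_graph_complement_image_half:
  assumes V: "finite (fst G)" and k: "k \<le> card (fst G)" and s: "bij_betw s (fst G) (fst G)"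
    and maps: "\<And>A. A \<in> fst (token_graph k G) \<Longrightarrow> fst G - s ` A \<in> fst (token_graph k G)"
  shows "2 * k = card (fst G)"
proof -
  obtain A where A: "A \<subseteq> fst G" "card A = k"
    using exists_subset_between[of "{}" k "fst G"] k V by auto
  then have "card (fst G - s ` A) = k"
    using maps[of A] by (simp add: token_graph_vertices)
  moreover have "card (s ` A) = k" "s ` A \<subseteq> fst G"
    using A s by (auto simp: card_image bij_betw_def inj_on_subset)
  ultimately show ?thesis
    using V by (simp add: card_Diff_subset finite_subset)
qed

lemma uniquely_reconstructible_aut_token_graph_cases:
  assumes G: "simple_graph G" and k: "k \<le> card (fst G)"
    and unique: "uniquely_reconstructible (token_graph k G) k G"
    and \<psi>: "\<psi> \<in> carrier (aut_group (token_graph k G))"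
  obtains s where "s \<in> carrier (aut_group G)" "\<psi> = token_aut G k s"
  | s where "s \<in> carrier (aut_group G)" "2 * k = card (fst G)"
      "\<psi> = token_compl G k \<otimes>\<^bsub>aut_group (token_graph k G)\<^esub> token_aut G k s"
proof -
  let ?W = "fst (token_graph k G)"
  have V: "finite (fst G)"
    using G by (simp add: simple_graph_def)
  have "token_reconstruction (token_graph k G) k G (\<lambda>A. A)"
    by (simp add: token_reconstruction_def graph_iso_def bij_betw_def)
  moreover have "token_reconstruction (token_graph k G) k G \<psi>"
    using \<psi> by (simp add: token_reconstruction_def aut_group_carrier)
  ultimately have "equiv_reconstructions (token_graph k G) G (\<lambda>A. A) \<psi>"
    using unique by (simp add: uniquely_reconstructible_def)
  then obtain s where s_iso: "graph_iso G G s"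
    and alternatives: "(\<forall>A\<in>?W. \<psi> A = iota s A) \<or> (\<forall>A\<in>?W. \<psi> A = compl_map G (iota s A))"
    by (auto simp: equiv_reconstructions_def)
  define s' where "s' = restrict s (fst G)"
  have s': "s' \<in> carrier (aut_group G)"
    unfolding s'_def using s_iso by (rule restrict_in_aut_group)
  then have s'_token: "token_aut G k s' \<in> carrier (aut_group (token_graph k G))"
    by (rule token_aut_in_aut_group[OF G])
  have iota_s: "iota s A = token_aut G k s' A" if "A \<in> ?W" for A
    using that by (auto simp: token_aut_apply iota_def s'_def token_graph_vertices)
  have \<psi>_ext: "\<psi> \<in> extensional ?W"
    using \<psi> by (simp add: aut_group_carrier Bij_def)
  from alternatives show thesis
  proof
    assume "\<forall>A\<in>?W. \<psi> A = iota s A"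
    then have "\<psi> = token_aut G k s'"
      using \<psi>_ext iota_s by (intro extensionalityI[of _ ?W]) (simp_all add: token_aut_def)
    then show thesis
      using s' by (rule that(1)[rotated])
  next
    assume compl: "\<forall>A\<in>?W. \<psi> A = compl_map G (iota s A)"
    have \<psi>_eq: "\<psi> A = fst G - token_aut G k s' A" if "A \<in> ?W" for A
      using compl iota_s that by (simp add: compl_map_def)
    have half: "2 * k = card (fst G)"
    proof (rule token_graph_complement_image_half[OF V k])
      show "bij_betw s' (fst G) (fst G)"
        using s' by (simp add: aut_group_carrier Bij_def)
      show "fst G - s' ` A \<in> ?W" if "A \<in> ?W" for A
        using aut_group_apply_in[OF \<psi> that] \<psi>_eq[OF that] that by (simp add: token_aut_apply)
    qed
    have "\<psi> = compose ?W (token_compl G k) (token_aut G k s')"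
    proof (rule extensionalityI[OF \<psi>_ext])
      fix A
      assume A: "A \<in> ?W"
      then show "\<psi> A = compose ?W (token_compl G k) (token_aut G k s') A"
        using \<psi>_eq[OF A] aut_group_apply_in[OF s'_token A] by (simp add: compose_def token_compl_apply)
    qed (simp add: compose_def)
    then show thesis
      using that(2)[OF s' half] token_compl_in_aut_group[OF V half] s'_token by simp
  qed
qed

lemma token_aut_image_eq_carrier:
  assumes G: "simple_graph G" and k: "0 < k" "k \<le> card (fst G)"
    and unique: "uniquely_reconstructible (token_graph k G) k G"
    and not_split: "\<not> (2 * k = card (fst G) \<and> 4 \<le> card (fst G))"
  shows "token_aut G k ` carrier (aut_group G) = carrier (aut_group (token_graph k G))"
proof
  show "token_aut G k ` carrier (aut_group G) \<subseteq> carrier (aut_group (token_graph k G))"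
    using token_aut_in_aut_group[OF G] by blast
  show "carrier (aut_group (token_graph k G)) \<subseteq> token_aut G k ` carrier (aut_group G)"
  proof
    fix \<psi>
    assume \<psi>: "\<psi> \<in> carrier (aut_group (token_graph k G))"
    show "\<psi> \<in> token_aut G k ` carrier (aut_group G)"
    proof (rule uniquely_reconstructible_aut_token_graph_cases[OF G k(2) unique \<psi>])
      fix s
      assume "s \<in> carrier (aut_group G)" "\<psi> = token_aut G k s"
      then show ?thesis
        by blast
    next
      fix s
      assume s: "s \<in> carrier (aut_group G)" and half: "2 * k = card (fst G)"
        and \<psi>_eq: "\<psi> = token_compl G k \<otimes>\<^bsub>aut_group (token_graph k G)\<^esub> token_aut G k s"
      have "card (fst G) = 2" "k = 1"
        using k half not_split by presburger+
      then obtain \<sigma> where \<sigma>: "\<sigma> \<in> carrier (aut_group G)" "token_compl G k = token_aut G k \<sigma>"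
        using token_compl_two_vertices[OF G] by blast
      then have "\<psi> = token_aut G k (\<sigma> \<otimes>\<^bsub>aut_group G\<^esub> s)"
        using \<psi>_eq s hom_mult[OF token_aut_hom[OF G]] by simp
      then show ?thesis
        using monoid.m_closed[OF group.is_monoid[OF group_aut_group] \<sigma>(1) s] by blast
    qed
  qed
qed

theorem proposition5:
  fixes G :: "'a graph" and k n :: nat
  assumes "simple_graph G"
    and "n = card (fst G)"
    and "1 \<le> k" and "k \<le> n - 1"
    and "uniquely_reconstructible (token_graph k G) k G"
  shows "if 2 * k = n \<and> n \<ge> 4
         then aut_group (token_graph k G) \<cong> aut_group G \<times>\<times> integer_mod_group 2
         else aut_group (token_graph k G) \<cong> aut_group G"
proof -
  have V: "finite (fst G)"
    using assms(1) by (simp add: simple_graph_def)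
  have k: "0 < k" "k < card (fst G)"
    using assms(2-4) by linarith+
  note hom = token_aut_hom[OF assms(1), of k] and inj = inj_on_token_aut[OF assms(1) k]
  show ?thesis
  proof (cases "2 * k = n \<and> n \<ge> 4")
    case True
    then have half: "2 * k = card (fst G)" and four: "4 \<le> card (fst G)"
      using assms(2) by auto
    have "carrier (aut_group (token_graph k G)) \<subseteq> token_aut G k ` carrier (aut_group G) \<union>
        (\<lambda>s. token_compl G k \<otimes>\<^bsub>aut_group (token_graph k G)\<^esub> token_aut G k s) ` carrier (aut_group G)"
      by (blast elim: uniquely_reconstructible_aut_token_graph_cases[OF assms(1) less_imp_le[OF k(2)] assms(5)])
    then show ?thesis
      using True group.iso_DirProd_integer_mod_group_2[OF group_aut_group group_aut_group hom inj
          token_compl_in_aut_group[OF V half] token_compl_square[OF V half]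
          token_compl_notin_token_aut_image[OF V half four] token_compl_commute[OF assms(1) half]]
      by simp
  next
    case False
    then have "token_aut G k \<in> iso (aut_group G) (aut_group (token_graph k G))"
      using hom inj token_aut_image_eq_carrier[OF assms(1) k(1) less_imp_le[OF k(2)] assms(5)] assms(2)
      by (simp add: iso_def bij_betw_def)
    then show ?thesis
      unfolding if_not_P[OF False] by (rule group.iso_sym[OF group_aut_group is_isoI])
  qed
qed

end
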